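(* Let $(\mathcal{G},\alpha)$ be an abstract GKM graph and $p\neq q$ vertices. Set $P=\prod_{e\in\mathcal{E}_p\setminus\mathcal{E}_{pq}}\alpha(e)$, $Q=\prod_{e\in\mathcal{E}_q\setminus\mathcal{E}_{qp}}\alpha(e)$, and for $e\in\mathcal{E}_{pq}$ let $c(e)=|\{e'\in\mathcal{E}_{pq}: e'\neq e,\ \alpha(\overline{e'})=-\alpha(e')\}|$. Then for every $e\in\mathcal{E}_{pq}$, the polynomial $P-(-1)^{c(e)}Q$ is divisible by $\alpha(e)$ in $H^*(BT)$.
   Context: $H^*(BT)=\mathbb{Z}[x_1,\dots,x_r]$ with $\deg x_i=2$. Let $\mathcal{G}$ be a finite $n$-valent undirected graph (multiple edges allowed, no loops) with vertex set $\mathcal{V}$ and set of directed edges $\mathcal{E}$; for $e\in\mathcal{E}$, $\overline e$ is the reversed edge, $i(e),t(e)$ its initial and terminal vertices, $\mathcal{E}_p=\{e: i(e)=p\}$, $\mathcal{E}_{pq}=\{e: i(e)=p,\ t(e)=q\}$. An axial function $\alpha:\mathcal{E}\to H^2(BT)$ satisfies: $\alpha(\overline e)=\pm\alpha(e)$; $\alpha(e),\alpha(e')$ linearly independent over $\mathbb{Z}$ if $e\ne e'$, $i(e)=i(e')$; coefficients of each $\alpha(e)$ have gcd $1$. An abstract GKM graph is such $(\mathcal{G},\alpha)$ admitting a parallel transport, i.e. bijections $\mathcal{P}_e:\mathcal{E}_{i(e)}\to\mathcal{E}_{t(e)}$ with $\mathcal{P}_{\overline e}=\mathcal{P}_e^{-1}$,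 $\mathcal{P}_e(e)=\overline e$, $\alpha(\mathcal{P}_e(e'))-\alpha(e')\in\mathbb{Z}\alpha(e)$ for all $e'\in\mathcal{E}_{i(e)}$. *)

theory Defs
  imports Main "HOL-Library.Poly_Mapping"
begin

text \<open>H^*(BT) = Z[x_1,...,x_r] is modelled as the subring of the polynomial ring
  ((nat =>0 nat) =>0 int) in the variables with index < r (variable x_(i+1) has index i).
  Elements of H^2(BT) are integer vectors a :: nat => int with a i = 0 for i >= r,
  identified with the linear forms sum_i a i * x_i.\<close>

type_synonym mpoly = "(nat \<Rightarrow>\<^sub>0 nat) \<Rightarrow>\<^sub>0 int"

definition lin_form :: "nat \<Rightarrow> (nat \<Rightarrow> int) \<Rightarrow> mpoly" where
  "lin_form r a = (\<Sum>i<r. Poly_Mapping.single (Poly_Mapping.single i 1) (a i))"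

definition graph :: "'v set \<Rightarrow> 'e set \<Rightarrow> ('e \<Rightarrow> 'v) \<Rightarrow> ('e \<Rightarrow> 'v) \<Rightarrow> ('e \<Rightarrow> 'e) \<Rightarrow> bool" where
  "graph V E src tgt bar \<longleftrightarrow> finite V \<and> finite E \<and>
     (\<forall>e\<in>E. src e \<in> V \<and> tgt e \<in> V \<and> src e \<noteq> tgt e \<and>
        bar e \<in> E \<and> bar e \<noteq> e \<and> bar (bar e) = e \<and> src (bar e) = tgt e \<and> tgt (bar e) = src e)"

definition out_edges :: "'e set \<Rightarrow> ('e \<Rightarrow> 'v) \<Rightarrow> 'v \<Rightarrow> 'e set" where
  "out_edges E src p = {e \<in> E. src e = p}"

definition edges_between :: "'e set \<Rightarrow> ('e \<Rightarrow> 'v) \<Rightarrow> ('e \<Rightarrow> 'v) \<Rightarrow> 'v \<Rightarrow> 'v \<Rightarrow> 'e set" where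
  "edges_between E src tgt p q = {e \<in> E. src e = p \<and> tgt e = q}"

definition n_valent :: "nat \<Rightarrow> 'v set \<Rightarrow> 'e set \<Rightarrow> ('e \<Rightarrow> 'v) \<Rightarrow> bool" where
  "n_valent n V E src \<longleftrightarrow> (\<forall>p\<in>V. card (out_edges E src p) = n)"

definition Z_lin_indep2 :: "(nat \<Rightarrow> int) \<Rightarrow> (nat \<Rightarrow> int) \<Rightarrow> bool" where
  "Z_lin_indep2 a b \<longleftrightarrow> (\<forall>k l :: int. (\<forall>i. k * a i + l * b i = 0) \<longrightarrow> k = 0 \<and> l = 0)"

definition axial_function ::
  "nat \<Rightarrow> 'e set \<Rightarrow> ('e \<Rightarrow> 'v) \<Rightarrow> ('e \<Rightarrow> 'e) \<Rightarrow> ('e \<Rightarrow> nat \<Rightarrow> int) \<Rightarrow> bool" where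
  "axial_function r E src bar \<alpha> \<longleftrightarrow>
     (\<forall>e\<in>E. \<forall>i\<ge>r. \<alpha> e i = 0) \<and>
     (\<forall>e\<in>E. \<alpha> (bar e) = \<alpha> e \<or> \<alpha> (bar e) = (\<lambda>i. - \<alpha> e i)) \<and>
     (\<forall>e\<in>E. \<forall>e'\<in>E. e \<noteq> e' \<and> src e = src e' \<longrightarrow> Z_lin_indep2 (\<alpha> e) (\<alpha> e')) \<and>
     (\<forall>e\<in>E. Gcd (\<alpha> e ` {..<r}) = 1)"

definition parallel_transport ::
  "'e set \<Rightarrow> ('e \<Rightarrow> 'v) \<Rightarrow> ('e \<Rightarrow> 'v) \<Rightarrow> ('e \<Rightarrow> 'e) \<Rightarrow> ('e \<Rightarrow> nat \<Rightarrow> int) \<Rightarrow> ('e \<Rightarrow> 'e \<Rightarrow> 'e) \<Rightarrow> bool" where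
  "parallel_transport E src tgt bar \<alpha> P \<longleftrightarrow>
     (\<forall>e\<in>E. bij_betw (P e) (out_edges E src (src e)) (out_edges E src (tgt e)) \<and>
        (\<forall>e'\<in>out_edges E src (src e). P (bar e) (P e e') = e') \<and>
        P e e = bar e \<and>
        (\<forall>e'\<in>out_edges E src (src e). \<exists>k::int. \<forall>i. \<alpha> (P e e') i - \<alpha> e' i = k * \<alpha> e i))"

definition abstract_GKM_graph ::
  "nat \<Rightarrow> nat \<Rightarrow> 'v set \<Rightarrow> 'e set \<Rightarrow> ('e \<Rightarrow> 'v) \<Rightarrow> ('e \<Rightarrow> 'v) \<Rightarrow> ('e \<Rightarrow> 'e) \<Rightarrow> ('e \<Rightarrow> nat \<Rightarrow> int) \<Rightarrow> bool" where
  "abstract_GKM_graph r n V E src tgt bar \<alpha> \<longleftrightarrow>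
     graph V E src tgt bar \<and> n_valent n V E src \<and> axial_function r E src bar \<alpha> \<and>
     (\<exists>P. parallel_transport E src tgt bar \<alpha> P)"

end

theory Submission
  imports Defs "HOL-Library.Multiset"
begin

text \<open>Work modulo \<open>a = \<alpha> e\<close>. Every vector \<open>v\<close> is congruent modulo \<open>\<int>a\<close> to
  \<open>\<plusminus>R\<close>, where \<open>R\<close> is a representative chosen once for the class of \<open>\<plusminus>v\<close>;
  so a product of linear forms is congruent modulo \<open>a\<close> to a sign times a product
  that depends only on the multiset of classes. Parallel transport along \<open>e\<close> is a
  bijection from the edges at \<open>p\<close> other than \<open>e\<close> to the edges at \<open>q\<close> other than
  \<open>bar e\<close> that preserves residues, hence classes and signs. The remaining edges from
  \<open>p\<close> to \<open>q\<close> are matched with those from \<open>q\<close> to \<open>p\<close> by reversal, which keeps the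
  class and flips the sign exactly when \<open>\<alpha> (bar f) = - \<alpha> f\<close> (the flip is genuine
  since \<open>\<alpha> f\<close> and \<open>a\<close> are independent). Cancelling these edges in the multisets of
  classes and in the products of signs gives \<open>P \<equiv> (-1)\<^sup>c Q\<close> without any
  factoriality of the polynomial ring.\<close>

lemma of_int_mult_single:
  "(of_int x :: mpoly) * Poly_Mapping.single m y = Poly_Mapping.single m (x * y)"
  by (metis single_of_int mult_single add_0 of_int_eq_id id_apply)

lemma lin_form_lincomb:
  "lin_form r (\<lambda>i. x * v i + y * w i) = of_int x * lin_form r v + of_int y * lin_form r w"
  unfolding lin_form_def
  by (simp add: sum_distrib_left sum.distrib of_int_mult_single single_add)

definition vec_cong :: "(nat \<Rightarrow> int) \<Rightarrow> (nat \<Rightarrow> int) \<Rightarrow> (nat \<Rightarrow> int) \<Rightarrow> bool" where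
  "vec_cong a v w \<longleftrightarrow> (\<exists>k::int. \<forall>i. w i - v i = k * a i)"

lemma vec_cong_refl: "vec_cong a v v"
  unfolding vec_cong_def by (intro exI[of _ 0]) simp

lemma vec_cong_sym:
  assumes "vec_cong a v w"
  shows "vec_cong a w v"
proof -
  from assms obtain k where "\<forall>i. w i - v i = k * a i" unfolding vec_cong_def by blast
  then have "\<forall>i. v i - w i = (- k) * a i" by (simp add: algebra_simps)
  then show ?thesis unfolding vec_cong_def by blast
qed

lemma vec_cong_trans:
  assumes "vec_cong a u v" and "vec_cong a v w"
  shows "vec_cong a u w"
proof -
  from assms obtain k l where "\<forall>i. v i - u i = k * a i" "\<forall>i. w i - v i = l * a i"
    unfolding vec_cong_def by blast
  then have "\<forall>i. w i - u i = (k + l) * a i" by (simp add: algebra_simps)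
  then show ?thesis unfolding vec_cong_def by blast
qed

lemma vec_cong_uminus:
  assumes "vec_cong a v w"
  shows "vec_cong a (\<lambda>i. - v i) (\<lambda>i. - w i)"
proof -
  from assms obtain k where "\<forall>i. w i - v i = k * a i" unfolding vec_cong_def by blast
  then have "\<forall>i. - w i - - v i = (- k) * a i" by (simp add: algebra_simps)
  then show ?thesis unfolding vec_cong_def by blast
qed

lemma lin_form_dvd_diff_if_vec_cong:
  assumes "vec_cong a v w"
  shows "lin_form r a dvd lin_form r w - lin_form r v"
proof -
  obtain k where "\<forall>i. w i - v i = k * a i" using assms unfolding vec_cong_def by blast
  then have "w = (\<lambda>i. 1 * v i + k * a i)" by (auto simp: algebra_simps)
  then have "lin_form r w - lin_form r v = of_int k * lin_form r a"
    using lin_form_lincomb[of r 1 v k a] by simp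
  then show ?thesis by simp
qed

lemma lin_form_uminus: "lin_form r (\<lambda>i. - v i) = - lin_form r v"
  using lin_form_lincomb[of r "-1" v 0 v] by simp

lemma not_vec_cong_uminus_if_Z_lin_indep2:
  assumes "Z_lin_indep2 a v"
  shows "\<not> vec_cong a v (\<lambda>i. - v i)"
proof
  assume "vec_cong a v (\<lambda>i. - v i)"
  then obtain k where "\<forall>i. - v i - v i = k * a i" unfolding vec_cong_def by blast
  then have "\<forall>i. k * a i + 2 * v i = 0" by (smt (verit))
  then show False using assms[unfolded Z_lin_indep2_def, rule_format, of k 2] by simp
qed

definition pm_class :: "(nat \<Rightarrow> int) \<Rightarrow> (nat \<Rightarrow> int) \<Rightarrow> (nat \<Rightarrow> int) set" where
  "pm_class a v = {w. vec_cong a v w \<or> vec_cong a (\<lambda>i. - v i) w}"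

definition pm_rep :: "(nat \<Rightarrow> int) \<Rightarrow> (nat \<Rightarrow> int) \<Rightarrow> nat \<Rightarrow> int" where
  "pm_rep a v = (SOME w. w \<in> pm_class a v)"

definition pm_sign :: "(nat \<Rightarrow> int) \<Rightarrow> (nat \<Rightarrow> int) \<Rightarrow> int" where
  "pm_sign a v = (if vec_cong a (pm_rep a v) v then 1 else -1)"

lemma pm_class_subset:
  assumes "w \<in> pm_class a v"
  shows "pm_class a w \<subseteq> pm_class a v"
proof
  fix u assume u: "u \<in> pm_class a w"
  have "vec_cong a v w \<or> vec_cong a (\<lambda>i. - v i) w" using assms by (simp add: pm_class_def)
  then have "(vec_cong a v w \<and> vec_cong a (\<lambda>i. - v i) (\<lambda>i. - w i)) \<or>
      (vec_cong a (\<lambda>i. - v i) w \<and> vec_cong a v (\<lambda>i. - w i))"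
    using vec_cong_uminus[of a v w] vec_cong_uminus[of a "\<lambda>i. - v i" w] by auto
  with u show "u \<in> pm_class a v"
    unfolding pm_class_def by (blast intro: vec_cong_trans)
qed

lemma pm_class_eq:
  assumes "w \<in> pm_class a v"
  shows "pm_class a w = pm_class a v"
proof
  show "pm_class a w \<subseteq> pm_class a v" using assms by (rule pm_class_subset)
  have "v \<in> pm_class a w"
    using assms vec_cong_uminus[of a "\<lambda>i. - v i" w]
    unfolding pm_class_def by (auto intro: vec_cong_sym)
  then show "pm_class a v \<subseteq> pm_class a w" by (rule pm_class_subset)
qed

lemma pm_class_uminus: "pm_class a (\<lambda>i. - v i) = pm_class a v"
  by (rule pm_class_eq) (simp add: pm_class_def vec_cong_refl)

lemma pm_rep_in_pm_class: "pm_rep a v \<in> pm_class a v"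
  unfolding pm_rep_def by (rule someI[of _ v]) (simp add: pm_class_def vec_cong_refl)

lemma lin_form_dvd_diff_pm_sign_pm_rep:
  "lin_form r a dvd lin_form r v - of_int (pm_sign a v) * lin_form r (pm_rep a v)"
proof (cases "vec_cong a (pm_rep a v) v")
  case True
  then show ?thesis
    by (simp add: pm_sign_def lin_form_dvd_diff_if_vec_cong)
next
  case False
  with pm_rep_in_pm_class have "vec_cong a (\<lambda>i. - v i) (pm_rep a v)"
    unfolding pm_class_def by (blast intro: vec_cong_sym)
  then have "lin_form r a dvd lin_form r (pm_rep a v) - lin_form r (\<lambda>i. - v i)"
    by (rule lin_form_dvd_diff_if_vec_cong)
  with False show ?thesis
    by (simp add: pm_sign_def lin_form_uminus add.commute)
qed

lemma pm_sign_vec_cong: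
  assumes "vec_cong a v w"
  shows "pm_sign a w = pm_sign a v"
proof -
  have "pm_class a w = pm_class a v"
    using assms by (intro pm_class_eq) (simp add: pm_class_def)
  then have "pm_rep a w = pm_rep a v" by (simp add: pm_rep_def)
  then show ?thesis
    using assms unfolding pm_sign_def by (metis vec_cong_sym vec_cong_trans)
qed

lemma pm_sign_uminus:
  assumes "\<not> vec_cong a v (\<lambda>i. - v i)"
  shows "pm_sign a (\<lambda>i. - v i) = - pm_sign a v"
proof -
  have rep: "pm_rep a (\<lambda>i. - v i) = pm_rep a v"
    by (simp add: pm_rep_def pm_class_uminus)
  have "vec_cong a (pm_rep a v) v \<or> vec_cong a (pm_rep a v) (\<lambda>i. - v i)"
    using pm_rep_in_pm_class unfolding pm_class_def by (blast intro: vec_cong_sym)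
  moreover have "\<not> (vec_cong a (pm_rep a v) v \<and> vec_cong a (pm_rep a v) (\<lambda>i. - v i))"
    using assms by (blast intro: vec_cong_sym vec_cong_trans)
  ultimately show ?thesis
    unfolding pm_sign_def rep by auto
qed

lemma dvd_prod_diff_prod:
  fixes f g :: "'i \<Rightarrow> 'a::comm_ring_1"
  assumes "\<And>x. x \<in> S \<Longrightarrow> d dvd f x - g x"
  shows "d dvd prod f S - prod g S"
  using assms
proof (induction S rule: infinite_finite_induct)
  case (insert x S)
  have "prod f (insert x S) - prod g (insert x S)
      = f x * (prod f S - prod g S) + (f x - g x) * prod g S"
    using insert.hyps by (simp add: algebra_simps)
  with insert show ?case by simp
qed simp_all

lemma prod_lin_form_dvd_diff_pm_sign_pm_rep:
  "lin_form r a dvd (\<Prod>f\<in>S. lin_form r (u f))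
     - of_int (\<Prod>f\<in>S. pm_sign a (u f)) * (\<Prod>f\<in>S. lin_form r (pm_rep a (u f)))"
proof -
  have "lin_form r a dvd (\<Prod>f\<in>S. lin_form r (u f))
      - (\<Prod>f\<in>S. of_int (pm_sign a (u f)) * lin_form r (pm_rep a (u f)))"
    by (rule dvd_prod_diff_prod) (rule lin_form_dvd_diff_pm_sign_pm_rep)
  then show ?thesis by (simp add: prod.distrib)
qed

lemma prod_lin_form_dvd_diff_if_pm_classes_eq:
  assumes "image_mset (\<lambda>f. pm_class a (u f)) (mset_set A)
      = image_mset (\<lambda>f. pm_class a (u f)) (mset_set B)"
    and "(\<Prod>f\<in>A. pm_sign a (u f)) = \<epsilon> * (\<Prod>f\<in>B. pm_sign a (u f))"
  shows "lin_form r a dvd (\<Prod>f\<in>A. lin_form r (u f)) - of_int \<epsilon> * (\<Prod>f\<in>B. lin_form r (u f))"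
proof -
  define G where "G S = (\<Prod>f\<in>S. lin_form r (pm_rep a (u f)))" for S
  have "G S = prod_mset (image_mset (\<lambda>K. lin_form r (SOME w. w \<in> K))
      (image_mset (\<lambda>f. pm_class a (u f)) (mset_set S)))" for S
    by (simp add: G_def pm_rep_def prod_unfold_prod_mset multiset.map_comp comp_def)
  then have "G A = G B" using assms(1) by simp
  have dvd_G: "lin_form r a dvd
      (\<Prod>f\<in>S. lin_form r (u f)) - of_int (\<Prod>f\<in>S. pm_sign a (u f)) * G S" for S
    unfolding G_def by (rule prod_lin_form_dvd_diff_pm_sign_pm_rep)
  have eq: "(\<Prod>f\<in>A. lin_form r (u f)) - of_int \<epsilon> * (\<Prod>f\<in>B. lin_form r (u f))
      = ((\<Prod>f\<in>A. lin_form r (u f)) - of_int (\<Prod>f\<in>A. pm_sign a (u f)) * G A)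
        - of_int \<epsilon> * ((\<Prod>f\<in>B. lin_form r (u f)) - of_int (\<Prod>f\<in>B. pm_sign a (u f)) * G B)"
    using \<open>G A = G B\<close> assms(2) by (simp add: algebra_simps)
  show ?thesis
    unfolding eq by (intro dvd_diff dvd_mult dvd_G)
qed

lemma image_mset_mset_set_bij_betw:
  assumes "bij_betw h S T" and "\<And>x. x \<in> S \<Longrightarrow> g (h x) = g x"
  shows "image_mset g (mset_set T) = image_mset g (mset_set S)"
proof -
  have "mset_set T = image_mset h (mset_set S)"
    using assms(1) by (simp add: bij_betw_def image_mset_mset_set)
  then have "image_mset g (mset_set T) = image_mset (g \<circ> h) (mset_set S)"
    by (simp add: multiset.map_comp)
  also have "\<dots> = image_mset g (mset_set S)"
    using assms(2) by (cases "finite S") (auto intro!: image_mset_cong)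
  finally show ?thesis .
qed

lemma prod_pm_sign_flip:
  assumes "\<And>f. f \<in> C \<Longrightarrow> u' f = u f \<or> u' f = (\<lambda>i. - u f i)"
    and "\<And>f. f \<in> C \<Longrightarrow> \<not> vec_cong a (u f) (\<lambda>i. - u f i)"
    and "finite C"
  shows "(\<Prod>f\<in>C. pm_sign a (u' f))
    = (-1) ^ card {f \<in> C. u' f = (\<lambda>i. - u f i)} * (\<Prod>f\<in>C. pm_sign a (u f))"
proof -
  let ?N = "{f \<in> C. u' f = (\<lambda>i. - u f i)}"
  have "pm_sign a (u' f) = (if f \<in> ?N then -1 else 1) * pm_sign a (u f)" if "f \<in> C" for f
  proof (cases "f \<in> ?N")
    case True
    then show ?thesis using assms(2)[OF that] by (simp add: pm_sign_uminus)
  next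
    case False
    then have "u' f = u f" using assms(1)[OF that] that by auto
    with False that show ?thesis by simp
  qed
  then have "(\<Prod>f\<in>C. pm_sign a (u' f))
      = (\<Prod>f\<in>C. (if f \<in> ?N then -1 else 1) * pm_sign a (u f))"
    by (rule prod.cong[OF refl])
  also have "\<dots> = (\<Prod>f\<in>C. if f \<in> ?N then -1 else 1) * (\<Prod>f\<in>C. pm_sign a (u f))"
    by (rule prod.distrib)
  also have "(\<Prod>f\<in>C. if f \<in> ?N then -1 else 1) = ((-1::int) ^ card ?N)"
    using assms(3) by (simp add: prod.If_cases Int_def)
  finally show ?thesis .
qed

lemma lin_form_dvd_prod_diff_transported_prod:
  fixes u :: "'e \<Rightarrow> nat \<Rightarrow> int"
  assumes finite: "finite (A \<union> C)" "finite (B \<union> C')"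
    and disjoint: "A \<inter> C = {}" "B \<inter> C' = {}"
    and transport: "bij_betw \<pi> (A \<union> C) (B \<union> C')"
      "\<And>f. f \<in> A \<union> C \<Longrightarrow> vec_cong a (u f) (u (\<pi> f))"
    and reversal: "bij_betw \<beta> C C'"
      "\<And>f. f \<in> C \<Longrightarrow> u (\<beta> f) = u f \<or> u (\<beta> f) = (\<lambda>i. - u f i)"
    and not_cong_uminus: "\<And>f. f \<in> C \<Longrightarrow> \<not> vec_cong a (u f) (\<lambda>i. - u f i)"
  shows "lin_form r a dvd (\<Prod>f\<in>A. lin_form r (u f))
    - (-1) ^ card {f \<in> C. u (\<beta> f) = (\<lambda>i. - u f i)} * (\<Prod>f\<in>B. lin_form r (u f))"
proof -
  define cls where "cls S = image_mset (\<lambda>f. pm_class a (u f)) (mset_set S)" for S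
  define sgn where "sgn S = (\<Prod>f\<in>S. pm_sign a (u f))" for S
  define c where "c = card {f \<in> C. u (\<beta> f) = (\<lambda>i. - u f i)}"
  have "cls (B \<union> C') = cls (A \<union> C)"
    unfolding cls_def using transport(1)
  proof (rule image_mset_mset_set_bij_betw)
    fix f assume "f \<in> A \<union> C"
    then show "pm_class a (u (\<pi> f)) = pm_class a (u f)"
      using transport(2) by (intro pm_class_eq) (simp add: pm_class_def)
  qed
  moreover have "cls C' = cls C"
    unfolding cls_def using reversal(1)
  proof (rule image_mset_mset_set_bij_betw)
    fix f assume "f \<in> C"
    then show "pm_class a (u (\<beta> f)) = pm_class a (u f)"
      using reversal(2) pm_class_uminus by metis
  qed
  ultimately have "cls A = cls B"
    using finite disjoint by (simp add: cls_def mset_set_Union)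
  have "sgn (B \<union> C') = (\<Prod>f\<in>A \<union> C. pm_sign a (u (\<pi> f)))"
    unfolding sgn_def by (rule prod.reindex_bij_betw[OF transport(1), symmetric])
  also have "\<dots> = sgn (A \<union> C)"
    unfolding sgn_def using transport(2) by (intro prod.cong refl pm_sign_vec_cong)
  finally have sgn_transport: "sgn (B \<union> C') = sgn (A \<union> C)" .
  have "sgn C' = (\<Prod>f\<in>C. pm_sign a (u (\<beta> f)))"
    unfolding sgn_def by (rule prod.reindex_bij_betw[OF reversal(1), symmetric])
  also have "\<dots> = (-1) ^ c * sgn C"
    unfolding sgn_def c_def using reversal(2) not_cong_uminus finite
    by (intro prod_pm_sign_flip) auto
  finally have sgn_reversal: "sgn C' = (-1) ^ c * sgn C" .
  have "sgn C \<noteq> 0"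
    unfolding sgn_def pm_sign_def using finite by simp
  with sgn_transport sgn_reversal have "sgn A = (-1) ^ c * sgn B"
    using finite disjoint by (simp add: sgn_def prod.union_disjoint mult.commute)
  then show ?thesis
    using prod_lin_form_dvd_diff_if_pm_classes_eq[of a u A B "(-1) ^ c" r] \<open>cls A = cls B\<close>
    by (simp add: cls_def sgn_def c_def)
qed

lemma graph_bij_betw_bar_edges_between_Diff:
  assumes "graph V E src tgt bar" and "e \<in> edges_between E src tgt p q"
  shows "bij_betw bar (edges_between E src tgt p q - {e}) (edges_between E src tgt q p - {bar e})"
proof -
  have "bij_betw bar (edges_between E src tgt p q) (edges_between E src tgt q p)"
    using assms(1) unfolding graph_def edges_between_def
    by (intro bij_betw_byWitness[where f' = bar]) auto
  moreover have "bar e \<in> edges_between E src tgt q p"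
    using assms unfolding graph_def edges_between_def by auto
  ultimately show ?thesis
    using assms(2) by (intro bij_betw_DiffI) auto
qed

lemma parallel_transport_bij_betw_out_edges_Diff:
  assumes "parallel_transport E src tgt bar \<alpha> P" and "e \<in> E"
  shows "bij_betw (P e) (out_edges E src (src e) - {e}) (out_edges E src (tgt e) - {bar e})"
proof -
  have bij: "bij_betw (P e) (out_edges E src (src e)) (out_edges E src (tgt e))"
    and Pe: "P e e = bar e"
    using assms unfolding parallel_transport_def by auto
  have "e \<in> out_edges E src (src e)"
    using assms(2) by (simp add: out_edges_def)
  then have "bar e \<in> out_edges E src (tgt e)"
    using bij Pe by (metis bij_betwE)
  with \<open>e \<in> out_edges E src (src e)\<close> show ?thesis
    using Pe by (intro bij_betw_DiffI[OF bij]) auto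
qed

lemma parallel_transport_vec_cong:
  assumes "parallel_transport E src tgt bar \<alpha> P" and "e \<in> E" and "f \<in> out_edges E src (src e)"
  shows "vec_cong (\<alpha> e) (\<alpha> f) (\<alpha> (P e f))"
  using bspec[OF assms(1)[unfolded parallel_transport_def] assms(2)] assms(3)
  unfolding vec_cong_def by blast

lemma axial_function_not_vec_cong_uminus:
  assumes "axial_function r E src bar \<alpha>" and "e \<in> E" "f \<in> E" "f \<noteq> e" "src f = src e"
  shows "\<not> vec_cong (\<alpha> e) (\<alpha> f) (\<lambda>i. - \<alpha> f i)"
  using assms unfolding axial_function_def by (metis not_vec_cong_uminus_if_Z_lin_indep2)

theorem lemma4p1:
  fixes r n :: nat and V :: "'v set" and E :: "'e set"
    and src tgt :: "'e \<Rightarrow> 'v" and bar :: "'e \<Rightarrow> 'e" and \<alpha> :: "'e \<Rightarrow> nat \<Rightarrow> int"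
    and p q :: 'v and e :: 'e
  assumes "abstract_GKM_graph r n V E src tgt bar \<alpha>"
    and "p \<in> V" and "q \<in> V" and "p \<noteq> q"
    and "e \<in> edges_between E src tgt p q"
  shows "lin_form r (\<alpha> e) dvd
     ((\<Prod>f \<in> out_edges E src p - edges_between E src tgt p q. lin_form r (\<alpha> f))
      - (-1) ^ card {f \<in> edges_between E src tgt p q. f \<noteq> e \<and> \<alpha> (bar f) = (\<lambda>i. - \<alpha> f i)}
        * (\<Prod>f \<in> out_edges E src q - edges_between E src tgt q p. lin_form r (\<alpha> f)))"
proof -
  obtain P where graph: "graph V E src tgt bar" and axial: "axial_function r E src bar \<alpha>"
    and transport: "parallel_transport E src tgt bar \<alpha> P"
    using assms(1) unfolding abstract_GKM_graph_def by blast
  have e: "e \<in> E" "src e = p" "tgt e = q"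
    using assms(5) by (auto simp: edges_between_def)
  have "finite E" and bar_sign: "\<forall>f\<in>E. \<alpha> (bar f) = \<alpha> f \<or> \<alpha> (bar f) = (\<lambda>i. - \<alpha> f i)"
    using graph axial by (simp_all add: graph_def axial_function_def)
  define C where "C = edges_between E src tgt p q - {e}"
  define C' where "C' = edges_between E src tgt q p - {bar e}"
  have "out_edges E src p - {e} = (out_edges E src p - edges_between E src tgt p q) \<union> C"
    and "out_edges E src q - {bar e} = (out_edges E src q - edges_between E src tgt q p) \<union> C'"
    using e graph by (auto simp: graph_def C_def C'_def out_edges_def edges_between_def)
  then have transport_bij: "bij_betw (P e) ((out_edges E src p - edges_between E src tgt p q) \<union> C)
      ((out_edges E src q - edges_between E src tgt q p) \<union> C')"
    using parallel_transport_bij_betw_out_edges_Diff[OF transport e(1)] e by simp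
  have reversal_bij: "bij_betw bar C C'"
    unfolding C_def C'_def by (rule graph_bij_betw_bar_edges_between_Diff[OF graph assms(5)])
  have sign_flips: "{f \<in> edges_between E src tgt p q. f \<noteq> e \<and> \<alpha> (bar f) = (\<lambda>i. - \<alpha> f i)}
      = {f \<in> C. \<alpha> (bar f) = (\<lambda>i. - \<alpha> f i)}"
    by (auto simp: C_def)
  show ?thesis
    unfolding sign_flips
  proof (rule lin_form_dvd_prod_diff_transported_prod[OF _ _ _ _ transport_bij _ reversal_bij])
    show "vec_cong (\<alpha> e) (\<alpha> f) (\<alpha> (P e f))"
      if "f \<in> (out_edges E src p - edges_between E src tgt p q) \<union> C" for f
      using that e by (intro parallel_transport_vec_cong[OF transport])
        (auto simp: C_def out_edges_def edges_between_def)
    show "\<not> vec_cong (\<alpha> e) (\<alpha> f) (\<lambda>i. - \<alpha> f i)" if "f \<in> C" for f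
      using that e by (intro axial_function_not_vec_cong_uminus[OF axial])
        (auto simp: C_def edges_between_def)
  qed (use \<open>finite E\<close> bar_sign in \<open>auto simp: C_def C'_def out_edges_def edges_between_def\<close>)
qed

end
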